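(* Let $\Psi=\begin{bmatrix}\Psi_{11}&\Psi_{12}\\ \Psi_{12}^\top&\Psi_{22}\end{bmatrix}$ be symmetric with $\Psi_{11}\in\mathbb{R}^{p\times p}$, $\Psi_{22}\in\mathbb{R}^{q\times q}$, and let $\mathcal{M}=\{Z\in\mathbb{R}^{p\times q}: \begin{bmatrix} I\\ Z^\top\end{bmatrix}^\top\Psi\begin{bmatrix} I\\ Z^\top\end{bmatrix}\ge0\}$. Define $\Psi|\Psi_{22}=\Psi_{11}-\Psi_{12}\Psi_{22}^{-1}\Psi_{12}^\top$ and $\Psi^\sharp=\begin{bmatrix}0&-I_q\\ I_p&0\end{bmatrix}\Psi^{-1}\begin{bmatrix}0&-I_p\\ I_q&0\end{bmatrix}$. Suppose $\Psi|\Psi_{22}>0$ and $\Psi_{22}<0$. Then $\mathcal{M}=\mathcal{M}_1=\mathcal{M}_2$, where \[ \mathcal{M}_1=\left\{Z: \begin{bmatrix} I\\ Z\end{bmatrix}^\top\Psi^\sharp\begin{bmatrix} I\\ Z\end{bmatrix}\ge0\right\},\qquad \mathcal{M}_2=\left\{Z: \begin{bmatrix} I\\ Z^\top\end{bmatrix}^\top\Psi\begin{bmatrix} I\\ Z^\top\end{bmatrix}=\mathcal{Q}\ \text{for some}\ \mathcal{Q}\ \text{with}\ 0\le\mathcal{Q}\le\Psi|\Psi_{22}\right\}. \] *)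

theory Defs
  imports "Jordan_Normal_Form.Matrix"
begin

text \<open>Inverse of a square matrix (the unique two-sided inverse; only meaningful when it exists).\<close>
definition mat_inv :: "real mat \<Rightarrow> real mat" where
  "mat_inv A = (THE B. B \<in> carrier_mat (dim_row A) (dim_row A) \<and> inverts_mat A B \<and> inverts_mat B A)"

definition psd :: "nat \<Rightarrow> real mat \<Rightarrow> bool" where
  "psd n A \<longleftrightarrow> A \<in> carrier_mat n n \<and> transpose_mat A = A \<and>
     (\<forall>v \<in> carrier_vec n. v \<bullet> (A *\<^sub>v v) \<ge> 0)"

definition pd :: "nat \<Rightarrow> real mat \<Rightarrow> bool" where
  "pd n A \<longleftrightarrow> A \<in> carrier_mat n n \<and> transpose_mat A = A \<and>
     (\<forall>v \<in> carrier_vec n. v \<noteq> 0\<^sub>v n \<longrightarrow> v \<bullet> (A *\<^sub>v v) > 0)"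

definition nd :: "nat \<Rightarrow> real mat \<Rightarrow> bool" where
  "nd n A \<longleftrightarrow> pd n (- A)"

definition loewner_le :: "nat \<Rightarrow> real mat \<Rightarrow> real mat \<Rightarrow> bool" where
  "loewner_le n A B \<longleftrightarrow> A \<in> carrier_mat n n \<and> B \<in> carrier_mat n n \<and> psd n (B - A)"

end

theory Submission
  imports Defs "Jordan_Normal_Form.Determinant"
begin

(* Write S = Psi | Psi22 > 0, N = - Psi22 > 0 and W = Z + Psi12 Psi22^-1. Completing the square
   in the second block gives

     [I; Z^T]^T Psi [I; Z^T] = S - W N W^T,

   so this matrix never exceeds S, and Z lies in M iff W N W^T <= S; hence M = M2. Solving
   Psi y = (-Z v, v) block by block gives

     [I; Z]^T Psi^# [I; Z] = N^-1 - W^T S^-1 W,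

   so Z lies in M1 iff W^T S^-1 W <= N^-1. The two bounds are equivalent: if W N W^T <= S, put
   b = W v and u = S^-1 b; then 2 b^T S^-1 b = 2 v^T (W^T u) <= v^T N^-1 v + (W^T u)^T N (W^T u)
   <= v^T N^-1 v + b^T S^-1 b, and the converse is the same argument with (S, N, W) replaced by
   (N^-1, S^-1, W^T). *)

abbreviation quad_form :: "'a :: semiring_0 mat \<Rightarrow> 'a vec \<Rightarrow> 'a" where
  "quad_form A v \<equiv> v \<bullet> (A *\<^sub>v v)"

lemma mat_inv_eqI:
  assumes A: "A \<in> carrier_mat n n" and B: "B \<in> carrier_mat n n"
    and AB: "A * B = 1\<^sub>m n" and BA: "B * A = 1\<^sub>m n"
  shows "mat_inv A = B"
  unfolding mat_inv_def
proof (rule the_equality)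
  show "B \<in> carrier_mat (dim_row A) (dim_row A) \<and> inverts_mat A B \<and> inverts_mat B A"
    using A B AB BA by (auto simp: inverts_mat_def)
next
  fix C assume "C \<in> carrier_mat (dim_row A) (dim_row A) \<and> inverts_mat A C \<and> inverts_mat C A"
  then have C: "C \<in> carrier_mat n n" and CA: "C * A = 1\<^sub>m n"
    using A by (auto simp: inverts_mat_def)
  have "C = C * (A * B)" using C AB by simp
  also have "\<dots> = (C * A) * B" using A B C by simp
  also have "\<dots> = B" using CA B by simp
  finally show "C = B" .
qed

lemma mat_inv_inverse:
  assumes A: "A \<in> carrier_mat n n" and det: "det A \<noteq> 0"
  shows "mat_inv A \<in> carrier_mat n n" and "A * mat_inv A = 1\<^sub>m n" and "mat_inv A * A = 1\<^sub>m n"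
proof -
  obtain B where B: "B \<in> carrier_mat n n" "B * A = 1\<^sub>m n" "A * B = 1\<^sub>m n"
    using det_non_zero_imp_unit[OF A det, of undefined] unfolding Units_def ring_mat_def by auto
  then have "mat_inv A = B" using mat_inv_eqI[OF A] by blast
  with B show "mat_inv A \<in> carrier_mat n n" "A * mat_inv A = 1\<^sub>m n" "mat_inv A * A = 1\<^sub>m n"
    by auto
qed

lemma inverse_of_sym_mat_sym:
  fixes A B :: "'a :: comm_ring_1 mat"
  assumes A: "A \<in> carrier_mat n n" and sym: "transpose_mat A = A"
    and B: "B \<in> carrier_mat n n" and AB: "A * B = 1\<^sub>m n"
  shows "transpose_mat B = B"
proof -
  have BtA: "transpose_mat B * A = 1\<^sub>m n"
    using transpose_mult[OF A B] AB sym by simp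
  have "transpose_mat B = transpose_mat B * (A * B)" using B AB by simp
  also have "\<dots> = (transpose_mat B * A) * B" using A B by simp
  also have "\<dots> = B" using BtA B by simp
  finally show ?thesis .
qed

lemma pd_imp_psd:
  assumes "pd n A"
  shows "psd n A"
proof -
  have "quad_form A v \<ge> 0" if v: "v \<in> carrier_vec n" for v
  proof (cases "v = 0\<^sub>v n")
    case True
    with assms show ?thesis unfolding pd_def by auto
  next
    case False
    with assms v show ?thesis unfolding pd_def by (auto intro: less_imp_le)
  qed
  with assms show ?thesis unfolding pd_def psd_def by simp
qed

lemma pd_det_nonzero:
  assumes "pd n A"
  shows "det A \<noteq> 0"
proof
  assume "det A = 0"
  then obtain v where "v \<in> carrier_vec n" "v \<noteq> 0\<^sub>v n" "A *\<^sub>v v = 0\<^sub>v n"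
    using det_0_iff_vec_prod_zero[of A n] assms unfolding pd_def by blast
  then show False using assms unfolding pd_def by force
qed

lemma nd_det_nonzero:
  assumes "nd n A"
  shows "det A \<noteq> 0"
proof
  have pd: "pd n (- A)" using assms unfolding nd_def .
  then have A: "A \<in> carrier_mat n n" unfolding pd_def by auto
  assume "det A = 0"
  then obtain v where v: "v \<in> carrier_vec n" "v \<noteq> 0\<^sub>v n" and "A *\<^sub>v v = 0\<^sub>v n"
    using det_0_iff_vec_prod_zero[OF A] by blast
  then have "(- A) *\<^sub>v v = 0\<^sub>v n" using A by simp
  moreover have "quad_form (- A) v > 0" using pd v unfolding pd_def by blast
  ultimately show False using v by simp
qed

lemma scalar_prod_mult_mat_vec_transpose:
  fixes A :: "'a :: comm_semiring_0 mat"
  assumes A: "A \<in> carrier_mat m n" and x: "x \<in> carrier_vec n" and y: "y \<in> carrier_vec m"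
  shows "(A *\<^sub>v x) \<bullet> y = x \<bullet> (transpose_mat A *\<^sub>v y)"
  using transpose_vec_mult_scalar[OF A x y] comm_scalar_prod[of "A *\<^sub>v x" m y]
    comm_scalar_prod[of x n "transpose_mat A *\<^sub>v y"] A x y by auto

lemma quad_form_uminus_mat:
  fixes A :: "'a :: comm_ring mat"
  assumes "A \<in> carrier_mat n n" and "v \<in> carrier_vec n"
  shows "quad_form (- A) v = - quad_form A v"
  using assms by simp

lemma quad_form_uminus_vec:
  fixes A :: "'a :: comm_ring mat"
  assumes "A \<in> carrier_mat n n" and "v \<in> carrier_vec n"
  shows "quad_form A (- v) = quad_form A v"
proof -
  have "A *\<^sub>v (- v) = - (A *\<^sub>v v)" using assms by (intro eq_vecI) auto
  then show ?thesis using assms by simp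
qed

lemma quad_form_mult_inverse:
  fixes A B :: "'a :: comm_semiring_1 mat"
  assumes A: "A \<in> carrier_mat n n" and B: "B \<in> carrier_mat n n"
    and BA: "B * A = 1\<^sub>m n" and v: "v \<in> carrier_vec n"
  shows "quad_form B (A *\<^sub>v v) = quad_form A v"
proof -
  have "B *\<^sub>v (A *\<^sub>v v) = v"
    using assoc_mult_mat_vec[OF B A v, symmetric] BA v by simp
  then show ?thesis using comm_scalar_prod[of "A *\<^sub>v v" n v] A v by simp
qed

lemma quad_form_congruence:
  fixes B C :: "'a :: comm_semiring_0 mat"
  assumes B: "B \<in> carrier_mat m n" and C: "C \<in> carrier_mat m m" and v: "v \<in> carrier_vec n"
  shows "quad_form (transpose_mat B * C * B) v = quad_form C (B *\<^sub>v v)"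
proof -
  have "(transpose_mat B * C * B) *\<^sub>v v = (transpose_mat B * C) *\<^sub>v (B *\<^sub>v v)"
    using B C v by (intro assoc_mult_mat_vec) auto
  also have "\<dots> = transpose_mat B *\<^sub>v (C *\<^sub>v (B *\<^sub>v v))"
    using B C v by (intro assoc_mult_mat_vec) auto
  finally have "(transpose_mat B * C * B) *\<^sub>v v = transpose_mat B *\<^sub>v (C *\<^sub>v (B *\<^sub>v v))" .
  then show ?thesis
    using scalar_prod_mult_mat_vec_transpose[OF B v, of "C *\<^sub>v (B *\<^sub>v v)"] B C v by simp
qed

lemma transpose_congruence:
  fixes B C :: "'a :: comm_semiring_0 mat"
  assumes B: "B \<in> carrier_mat m n" and C: "C \<in> carrier_mat m m" and sym: "transpose_mat C = C"
  shows "transpose_mat (transpose_mat B * C * B) = transpose_mat B * C * B"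
proof -
  have "transpose_mat (transpose_mat B * C * B) = transpose_mat B * transpose_mat (transpose_mat B * C)"
    using B C by (intro transpose_mult) auto
  also have "transpose_mat (transpose_mat B * C) = C * B"
    using B C sym transpose_mult[of "transpose_mat B" n m C m] by auto
  also have "transpose_mat B * (C * B) = transpose_mat B * C * B"
    using B C by simp
  finally show ?thesis .
qed

lemma psd_congruence_iff:
  assumes B: "B \<in> carrier_mat m n" and C: "C \<in> carrier_mat m m" and sym: "transpose_mat C = C"
  shows "psd n (transpose_mat B * C * B) \<longleftrightarrow> (\<forall>v \<in> carrier_vec n. quad_form C (B *\<^sub>v v) \<ge> 0)"
  using transpose_congruence[OF assms] quad_form_congruence[OF B C] B C unfolding psd_def by auto

lemma psd_inverse:
  assumes A: "psd n A" and B: "B \<in> carrier_mat n n"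
    and AB: "A * B = 1\<^sub>m n" and BA: "B * A = 1\<^sub>m n"
  shows "psd n B"
proof -
  have A_carrier: "A \<in> carrier_mat n n" and A_sym: "transpose_mat A = A"
    using A unfolding psd_def by auto
  have "quad_form B v \<ge> 0" if v: "v \<in> carrier_vec n" for v
  proof -
    have "quad_form A (B *\<^sub>v v) \<ge> 0" using A B v unfolding psd_def by simp
    then show ?thesis unfolding quad_form_mult_inverse[OF B A_carrier AB v] .
  qed
  then show ?thesis
    using inverse_of_sym_mat_sym[OF A_carrier A_sym B AB] B unfolding psd_def by auto
qed

text \<open>Expand \<open>0 \<le> quad_form K (Ki *\<^sub>v b - u)\<close>.\<close>
lemma two_scalar_prod_le_quad_forms:
  fixes K Ki :: "real mat"
  assumes K: "psd n K" and Ki: "Ki \<in> carrier_mat n n" and KKi: "K * Ki = 1\<^sub>m n"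
    and b: "b \<in> carrier_vec n" and u: "u \<in> carrier_vec n"
  shows "2 * (b \<bullet> u) \<le> quad_form Ki b + quad_form K u"
proof -
  have K_carrier: "K \<in> carrier_mat n n" and K_sym: "transpose_mat K = K"
    using K unfolding psd_def by auto
  define x where "x = Ki *\<^sub>v b - u"
  have x: "x \<in> carrier_vec n" using Ki b u by (simp add: x_def)
  have Kib: "Ki *\<^sub>v b \<in> carrier_vec n" using Ki b by simp
  have KKib: "K *\<^sub>v (Ki *\<^sub>v b) = b"
    using assoc_mult_mat_vec[OF K_carrier Ki b, symmetric] KKi b by simp
  have Kx: "K *\<^sub>v x = b - K *\<^sub>v u"
    unfolding x_def using mult_minus_distrib_mat_vec[OF K_carrier Kib u] KKib by simp
  have "quad_form K x = (Ki *\<^sub>v b) \<bullet> b - (Ki *\<^sub>v b) \<bullet> (K *\<^sub>v u) - (u \<bullet> b - u \<bullet> (K *\<^sub>v u))"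
    unfolding Kx unfolding x_def using K_carrier b u Kib
    by (simp add: minus_scalar_prod_distrib[of _ n] scalar_prod_minus_distrib[of _ n])
  also have "(Ki *\<^sub>v b) \<bullet> (K *\<^sub>v u) = b \<bullet> u"
    using scalar_prod_mult_mat_vec_transpose[OF K_carrier Kib u] KKib K_sym by simp
  also have "(Ki *\<^sub>v b) \<bullet> b = quad_form Ki b" using comm_scalar_prod[OF Kib b] .
  also have "u \<bullet> b = b \<bullet> u" using comm_scalar_prod[OF u b] .
  finally show ?thesis using x K unfolding psd_def by force
qed

lemma congruence_le_imp_inverse_congruence_le:
  fixes S Si N Ni W :: "real mat"
  assumes S: "S \<in> carrier_mat p p" and Si: "Si \<in> carrier_mat p p" and SSi: "S * Si = 1\<^sub>m p"
    and N: "psd q N" and Ni: "Ni \<in> carrier_mat q q" and NNi: "N * Ni = 1\<^sub>m q"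
    and W: "W \<in> carrier_mat p q"
    and le: "\<forall>u \<in> carrier_vec p. quad_form N (transpose_mat W *\<^sub>v u) \<le> quad_form S u"
    and v: "v \<in> carrier_vec q"
  shows "quad_form Si (W *\<^sub>v v) \<le> quad_form Ni v"
proof -
  define b where "b = W *\<^sub>v v"
  define u where "u = Si *\<^sub>v b"
  define a where "a = transpose_mat W *\<^sub>v u"
  have b: "b \<in> carrier_vec p" using W v b_def by simp
  have u: "u \<in> carrier_vec p" using Si b u_def by simp
  have a: "a \<in> carrier_vec q" using W u a_def by simp
  have Su: "S *\<^sub>v u = b"
    using assoc_mult_mat_vec[OF S Si b, symmetric] SSi b unfolding u_def by simp
  have "quad_form N a \<le> quad_form S u" using le u unfolding a_def by auto
  also have "\<dots> = b \<bullet> u" using Su comm_scalar_prod[OF u b] by simp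
  finally have "quad_form N a \<le> b \<bullet> u" .
  moreover have "2 * (v \<bullet> a) \<le> quad_form Ni v + quad_form N a"
    by (rule two_scalar_prod_le_quad_forms[OF N Ni NNi v a])
  moreover have "v \<bullet> a = b \<bullet> u"
    using scalar_prod_mult_mat_vec_transpose[OF W v u] unfolding a_def b_def by simp
  ultimately show ?thesis unfolding b_def[symmetric] u_def[symmetric] by linarith
qed

lemma congruence_le_iff_inverse_congruence_le:
  fixes S Si N Ni W :: "real mat"
  assumes S: "psd p S" and Si: "Si \<in> carrier_mat p p" and SSi: "S * Si = 1\<^sub>m p" and SiS: "Si * S = 1\<^sub>m p"
    and N: "psd q N" and Ni: "Ni \<in> carrier_mat q q" and NNi: "N * Ni = 1\<^sub>m q" and NiN: "Ni * N = 1\<^sub>m q"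
    and W: "W \<in> carrier_mat p q"
  shows "(\<forall>u \<in> carrier_vec p. quad_form N (transpose_mat W *\<^sub>v u) \<le> quad_form S u)
     \<longleftrightarrow> (\<forall>v \<in> carrier_vec q. quad_form Si (W *\<^sub>v v) \<le> quad_form Ni v)"
proof -
  have S_carrier: "S \<in> carrier_mat p p" and N_carrier: "N \<in> carrier_mat q q"
    using S N unfolding psd_def by auto
  have "psd p Si" by (rule psd_inverse[OF S Si SSi SiS])
  moreover have "transpose_mat W \<in> carrier_mat q p" using W by simp
  ultimately show ?thesis
    using congruence_le_imp_inverse_congruence_le[OF S_carrier Si SSi N Ni NNi W]
      congruence_le_imp_inverse_congruence_le[OF Ni N_carrier NiN _ S_carrier SiS, of "transpose_mat W"]
    by auto
qed

abbreviation swap_block_mat :: "nat \<Rightarrow> nat \<Rightarrow> 'a :: comm_ring_1 mat" where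
  "swap_block_mat p q \<equiv> four_block_mat (0\<^sub>m p q) (- 1\<^sub>m p) (1\<^sub>m q) (0\<^sub>m q p)"

lemma swap_block_mat_transpose: "swap_block_mat q p = - transpose_mat (swap_block_mat p q)"
  by (rule eq_matI) auto

lemma swap_block_mat_mult_graph:
  fixes Z :: "'a :: comm_ring_1 mat"
  assumes Z: "Z \<in> carrier_mat p q" and v: "v \<in> carrier_vec q"
  shows "swap_block_mat p q *\<^sub>v ((1\<^sub>m q @\<^sub>r Z) *\<^sub>v v) = (- (Z *\<^sub>v v)) @\<^sub>v v"
  using mat_mult_append[of "1\<^sub>m q" q q Z p v] Z v
    four_block_mat_mult_vec[of "0\<^sub>m p q" p q "- 1\<^sub>m p" p "1\<^sub>m q" q "0\<^sub>m q p" v "Z *\<^sub>v v"]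
  by (auto intro!: eq_vecI)

locale sym_block_schur =
  fixes p q :: nat and P11 P12 P22 :: "real mat"
  assumes P11: "P11 \<in> carrier_mat p p" and P12: "P12 \<in> carrier_mat p q"
    and P22: "P22 \<in> carrier_mat q q"
    and P11_sym: "transpose_mat P11 = P11" and P22_sym: "transpose_mat P22 = P22"
    and P22_det: "det P22 \<noteq> 0"
begin

abbreviation Psi :: "real mat" where
  "Psi \<equiv> four_block_mat P11 P12 (transpose_mat P12) P22"

abbreviation S :: "real mat" where
  "S \<equiv> P11 - P12 * mat_inv P22 * transpose_mat P12"

lemmas P22_inv = mat_inv_inverse[OF P22 P22_det]

lemma P22_inv_sym: "transpose_mat (mat_inv P22) = mat_inv P22"
  using inverse_of_sym_mat_sym[OF P22 P22_sym P22_inv(1,2)] .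

lemma S_carrier: "S \<in> carrier_mat p p"
  using P12 P22_inv(1) by (intro minus_carrier_mat) auto

lemma S_sym: "transpose_mat S = S"
proof -
  have "transpose_mat (P12 * mat_inv P22 * transpose_mat P12) = P12 * mat_inv P22 * transpose_mat P12"
    using transpose_congruence[of "transpose_mat P12" q p "mat_inv P22"] P12 P22_inv(1) P22_inv_sym
    by simp
  then show ?thesis
    using transpose_minus[OF P11, of "P12 * mat_inv P22 * transpose_mat P12"] P11_sym P12 P22_inv(1)
    by simp
qed

lemma Psi_carrier: "Psi \<in> carrier_mat (p + q) (p + q)"
  using P11 P12 P22 by simp

lemma Psi_sym: "transpose_mat Psi = Psi"
  using transpose_four_block_mat[OF P11 P12 _ P22] P12 P11_sym P22_sym by simp

lemma Psi_mult_append_vec: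
  assumes y1: "y1 \<in> carrier_vec p" and y2: "y2 \<in> carrier_vec q"
  shows "Psi *\<^sub>v (y1 @\<^sub>v y2) = (P11 *\<^sub>v y1 + P12 *\<^sub>v y2) @\<^sub>v (transpose_mat P12 *\<^sub>v y1 + P22 *\<^sub>v y2)"
  using four_block_mat_mult_vec[OF P11 P12 _ P22 y1 y2] P12 by simp

lemma S_mult_vec:
  assumes y: "y \<in> carrier_vec p"
  shows "S *\<^sub>v y = P11 *\<^sub>v y - P12 *\<^sub>v (mat_inv P22 *\<^sub>v (transpose_mat P12 *\<^sub>v y))"
proof -
  have "(P12 * mat_inv P22 * transpose_mat P12) *\<^sub>v y = (P12 * mat_inv P22) *\<^sub>v (transpose_mat P12 *\<^sub>v y)"
    using P12 P22_inv(1) y by (intro assoc_mult_mat_vec) auto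
  also have "\<dots> = P12 *\<^sub>v (mat_inv P22 *\<^sub>v (transpose_mat P12 *\<^sub>v y))"
    using P12 P22_inv(1) y by (intro assoc_mult_mat_vec) auto
  finally show ?thesis
    using minus_mult_distrib_mat_vec[OF P11 _ y, of "P12 * mat_inv P22 * transpose_mat P12"] P12 P22_inv(1)
    by simp
qed

lemma quad_form_Psi:
  assumes y1: "y1 \<in> carrier_vec p" and y2: "y2 \<in> carrier_vec q"
  shows "quad_form Psi (y1 @\<^sub>v y2) = quad_form S y1
    + quad_form P22 (y2 + mat_inv P22 *\<^sub>v (transpose_mat P12 *\<^sub>v y1))"
proof -
  define c where "c = mat_inv P22 *\<^sub>v (transpose_mat P12 *\<^sub>v y1)"
  have c: "c \<in> carrier_vec q" using P22_inv(1) P12 y1 c_def by simp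
  have t: "transpose_mat P12 *\<^sub>v y1 \<in> carrier_vec q" using P12 y1 by simp
  have P22c: "P22 *\<^sub>v c = transpose_mat P12 *\<^sub>v y1"
    unfolding c_def using assoc_mult_mat_vec[OF P22 P22_inv(1) t, symmetric] P22_inv(2) t by simp
  have carriers: "P11 *\<^sub>v y1 \<in> carrier_vec p" "P12 *\<^sub>v y2 \<in> carrier_vec p" "P12 *\<^sub>v c \<in> carrier_vec p"
    "P22 *\<^sub>v y2 \<in> carrier_vec q" "P22 *\<^sub>v c \<in> carrier_vec q"
    using P11 P12 P22 y1 y2 c by auto
  have lhs: "quad_form Psi (y1 @\<^sub>v y2)
     = y1 \<bullet> (P11 *\<^sub>v y1) + y1 \<bullet> (P12 *\<^sub>v y2) + (y2 \<bullet> (transpose_mat P12 *\<^sub>v y1) + y2 \<bullet> (P22 *\<^sub>v y2))"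
    unfolding Psi_mult_append_vec[OF y1 y2]
    using scalar_prod_append[OF y1 y2, of "P11 *\<^sub>v y1 + P12 *\<^sub>v y2" "transpose_mat P12 *\<^sub>v y1 + P22 *\<^sub>v y2"]
      carriers t y1 y2
    by (simp add: scalar_prod_add_distrib[of _ p] scalar_prod_add_distrib[of _ q])
  have rhs1: "quad_form S y1 = y1 \<bullet> (P11 *\<^sub>v y1) - y1 \<bullet> (P12 *\<^sub>v c)"
    unfolding S_mult_vec[OF y1] c_def[symmetric] using carriers y1
    by (simp add: scalar_prod_minus_distrib[of _ p])
  have rhs2: "quad_form P22 (y2 + c)
     = y2 \<bullet> (P22 *\<^sub>v y2) + y2 \<bullet> (P22 *\<^sub>v c) + (c \<bullet> (P22 *\<^sub>v y2) + c \<bullet> (P22 *\<^sub>v c))"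
    using mult_add_distrib_mat_vec[OF P22 y2 c] carriers y2 c
    by (simp add: add_scalar_prod_distrib[of _ q] scalar_prod_add_distrib[of _ q])
  have "c \<bullet> (P22 *\<^sub>v y2) = y1 \<bullet> (P12 *\<^sub>v y2)"
    using scalar_prod_mult_mat_vec_transpose[OF P22 y2 c] P22_sym P22c
      scalar_prod_mult_mat_vec_transpose[OF P12 y2 y1] comm_scalar_prod[OF carriers(2) y1]
      comm_scalar_prod[OF t y2] comm_scalar_prod[OF carriers(4) c]
    by simp
  moreover have "c \<bullet> (P22 *\<^sub>v c) = y1 \<bullet> (P12 *\<^sub>v c)"
    using P22c scalar_prod_mult_mat_vec_transpose[OF P12 c y1] comm_scalar_prod[OF carriers(3) y1]
      comm_scalar_prod[OF t c] by simp
  moreover have "y2 \<bullet> (P22 *\<^sub>v c) = y2 \<bullet> (transpose_mat P12 *\<^sub>v y1)" using P22c by simp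
  ultimately show ?thesis unfolding c_def[symmetric] lhs rhs1 rhs2 by simp
qed

lemma Psi_mult_append_vec_eqD:
  assumes y1: "y1 \<in> carrier_vec p" and y2: "y2 \<in> carrier_vec q"
    and a: "a \<in> carrier_vec p" and b: "b \<in> carrier_vec q"
    and eq: "Psi *\<^sub>v (y1 @\<^sub>v y2) = a @\<^sub>v b"
  shows "S *\<^sub>v y1 = a - P12 *\<^sub>v (mat_inv P22 *\<^sub>v b)"
    and "y2 + mat_inv P22 *\<^sub>v (transpose_mat P12 *\<^sub>v y1) = mat_inv P22 *\<^sub>v b"
proof -
  have first: "P11 *\<^sub>v y1 + P12 *\<^sub>v y2 = a" and second: "transpose_mat P12 *\<^sub>v y1 + P22 *\<^sub>v y2 = b"
    using eq Psi_mult_append_vec[OF y1 y2] append_vec_eq[of "P11 *\<^sub>v y1 + P12 *\<^sub>v y2" p a]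
      P11 P12 y1 y2 a
    by auto
  define c where "c = mat_inv P22 *\<^sub>v (transpose_mat P12 *\<^sub>v y1)"
  have c: "c \<in> carrier_vec q" using P22_inv(1) P12 y1 c_def by simp
  have t: "transpose_mat P12 *\<^sub>v y1 \<in> carrier_vec q" using P12 y1 by simp
  have "mat_inv P22 *\<^sub>v b = c + mat_inv P22 *\<^sub>v (P22 *\<^sub>v y2)"
    unfolding second[symmetric] c_def using mult_add_distrib_mat_vec[OF P22_inv(1) t] P22 y2 by simp
  also have "mat_inv P22 *\<^sub>v (P22 *\<^sub>v y2) = y2"
    using assoc_mult_mat_vec[OF P22_inv(1) P22 y2, symmetric] P22_inv(3) y2 by simp
  finally have inv_b: "mat_inv P22 *\<^sub>v b = c + y2" .
  then show "y2 + mat_inv P22 *\<^sub>v (transpose_mat P12 *\<^sub>v y1) = mat_inv P22 *\<^sub>v b"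
    unfolding c_def[symmetric] using c y2 by (simp add: comm_add_vec)
  have "P12 *\<^sub>v (mat_inv P22 *\<^sub>v b) = P12 *\<^sub>v c + P12 *\<^sub>v y2"
    unfolding inv_b using mult_add_distrib_mat_vec[OF P12 c y2] .
  then show "S *\<^sub>v y1 = a - P12 *\<^sub>v (mat_inv P22 *\<^sub>v b)"
    unfolding S_mult_vec[OF y1] c_def[symmetric] first[symmetric]
    using P11 P12 y1 y2 c by (intro eq_vecI) auto
qed

lemma Psi_det_nonzero:
  assumes S_det: "det S \<noteq> 0"
  shows "det Psi \<noteq> 0"
proof
  assume "det Psi = 0"
  then obtain v where v: "v \<in> carrier_vec (p + q)" "v \<noteq> 0\<^sub>v (p + q)"
    and Psi_v: "Psi *\<^sub>v v = 0\<^sub>v (p + q)"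
    using det_0_iff_vec_prod_zero[OF Psi_carrier] by blast
  define y1 where "y1 = vec_first v p"
  define y2 where "y2 = vec_last v q"
  have y1: "y1 \<in> carrier_vec p" and y2: "y2 \<in> carrier_vec q" unfolding y1_def y2_def by auto
  have v_split: "v = y1 @\<^sub>v y2"
    unfolding y1_def y2_def using vec_first_last_append[OF v(1)] by (rule sym)
  have zero_split: "0\<^sub>v (p + q) = (0\<^sub>v p :: real vec) @\<^sub>v 0\<^sub>v q" by (rule eq_vecI) auto
  have mult_zero: "A *\<^sub>v 0\<^sub>v n = 0\<^sub>v m" if "A \<in> carrier_mat m n" for A :: "real mat" and m n
    using that by (intro eq_vecI) auto
  note eqD = Psi_mult_append_vec_eqD[OF y1 y2 zero_carrier_vec zero_carrier_vec
      Psi_v[unfolded v_split zero_split]]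
  have "S *\<^sub>v y1 = 0\<^sub>v p"
    unfolding eqD(1) using mult_zero[OF P22_inv(1)] mult_zero[OF P12] by simp
  then have y1_0: "y1 = 0\<^sub>v p" using det_0_iff_vec_prod_zero[OF S_carrier] S_det y1 by blast
  have "y2 = 0\<^sub>v q"
    using eqD(2) mult_zero[OF P22_inv(1)] mult_zero[of "transpose_mat P12" q p] P12 y2
    unfolding y1_0 by simp
  then show False using v(2) unfolding v_split y1_0 zero_split by simp
qed

lemma quad_form_mat_inv_Psi:
  assumes S_det: "det S \<noteq> 0" and a: "a \<in> carrier_vec p" and b: "b \<in> carrier_vec q"
  shows "quad_form (mat_inv Psi) (a @\<^sub>v b)
    = quad_form (mat_inv S) (a - P12 *\<^sub>v (mat_inv P22 *\<^sub>v b)) + quad_form (mat_inv P22) b"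
proof -
  note X = mat_inv_inverse[OF Psi_carrier Psi_det_nonzero[OF S_det]]
  note Si = mat_inv_inverse[OF S_carrier S_det]
  have r: "a @\<^sub>v b \<in> carrier_vec (p + q)" using a b by simp
  define y where "y = mat_inv Psi *\<^sub>v (a @\<^sub>v b)"
  have y: "y \<in> carrier_vec (p + q)" unfolding y_def using X(1) r by (rule mult_mat_vec_carrier)
  have "Psi *\<^sub>v y = (Psi * mat_inv Psi) *\<^sub>v (a @\<^sub>v b)"
    unfolding y_def by (rule assoc_mult_mat_vec[OF Psi_carrier X(1) r, symmetric])
  also have "\<dots> = a @\<^sub>v b"
    unfolding X(2) using r by (rule one_mult_mat_vec)
  finally have Psi_y: "Psi *\<^sub>v y = a @\<^sub>v b" .
  define y1 where "y1 = vec_first y p"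
  define y2 where "y2 = vec_last y q"
  have y1: "y1 \<in> carrier_vec p" and y2: "y2 \<in> carrier_vec q" unfolding y1_def y2_def by auto
  have y_split: "y = y1 @\<^sub>v y2" unfolding y1_def y2_def using vec_first_last_append[OF y] by (rule sym)
  note eqD = Psi_mult_append_vec_eqD[OF y1 y2 a b Psi_y[unfolded y_split]]
  have "quad_form (mat_inv Psi) (a @\<^sub>v b) = quad_form Psi y"
    using quad_form_mult_inverse[OF Psi_carrier X(1) X(3) y] unfolding Psi_y .
  also have "\<dots> = quad_form S y1 + quad_form P22 (mat_inv P22 *\<^sub>v b)"
    unfolding y_split quad_form_Psi[OF y1 y2] eqD(2) ..
  also have "quad_form S y1 = quad_form (mat_inv S) (a - P12 *\<^sub>v (mat_inv P22 *\<^sub>v b))"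
    using quad_form_mult_inverse[OF S_carrier Si(1) Si(3) y1] unfolding eqD(1) by (rule sym)
  also have "quad_form P22 (mat_inv P22 *\<^sub>v b) = quad_form (mat_inv P22) b"
    by (rule quad_form_mult_inverse[OF P22_inv(1) P22 P22_inv(2) b])
  finally show ?thesis .
qed

lemma quad_form_graph:
  assumes Z: "Z \<in> carrier_mat p q" and u: "u \<in> carrier_vec p"
  shows "quad_form (transpose_mat (1\<^sub>m p @\<^sub>r transpose_mat Z) * Psi * (1\<^sub>m p @\<^sub>r transpose_mat Z)) u
    = quad_form S u + quad_form P22 (transpose_mat (Z + P12 * mat_inv P22) *\<^sub>v u)"
proof -
  have T: "1\<^sub>m p @\<^sub>r transpose_mat Z \<in> carrier_mat (p + q) p" using Z by auto
  have Tu: "(1\<^sub>m p @\<^sub>r transpose_mat Z) *\<^sub>v u = u @\<^sub>v (transpose_mat Z *\<^sub>v u)"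
    using mat_mult_append[of "1\<^sub>m p" p p "transpose_mat Z" q u] Z u by simp
  have "transpose_mat (Z + P12 * mat_inv P22) = transpose_mat Z + mat_inv P22 * transpose_mat P12"
    using transpose_add[of Z p q "P12 * mat_inv P22"] transpose_mult[OF P12 P22_inv(1)]
      P22_inv_sym Z P12 P22_inv(1) by simp
  moreover have "(mat_inv P22 * transpose_mat P12) *\<^sub>v u = mat_inv P22 *\<^sub>v (transpose_mat P12 *\<^sub>v u)"
    using P22_inv(1) P12 u by (intro assoc_mult_mat_vec) auto
  ultimately have W_u: "transpose_mat (Z + P12 * mat_inv P22) *\<^sub>v u
      = transpose_mat Z *\<^sub>v u + mat_inv P22 *\<^sub>v (transpose_mat P12 *\<^sub>v u)"
    using add_mult_distrib_mat_vec[of "transpose_mat Z" q p "mat_inv P22 * transpose_mat P12" u]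
      Z P22_inv(1) P12 u by simp
  have Z_u: "transpose_mat Z *\<^sub>v u \<in> carrier_vec q" using Z u by simp
  show ?thesis
    unfolding quad_form_congruence[OF T Psi_carrier u] Tu quad_form_Psi[OF u Z_u] W_u ..
qed

lemma psd_graph_iff:
  assumes Z: "Z \<in> carrier_mat p q"
  shows "psd p (transpose_mat (1\<^sub>m p @\<^sub>r transpose_mat Z) * Psi * (1\<^sub>m p @\<^sub>r transpose_mat Z))
    \<longleftrightarrow> (\<forall>u \<in> carrier_vec p.
          quad_form (- P22) (transpose_mat (Z + P12 * mat_inv P22) *\<^sub>v u) \<le> quad_form S u)"
proof -
  let ?F = "transpose_mat (1\<^sub>m p @\<^sub>r transpose_mat Z) * Psi * (1\<^sub>m p @\<^sub>r transpose_mat Z)"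
  have T: "1\<^sub>m p @\<^sub>r transpose_mat Z \<in> carrier_mat (p + q) p" using Z by auto
  have W: "transpose_mat (Z + P12 * mat_inv P22) \<in> carrier_mat q p" using Z P12 P22_inv(1) by simp
  have "psd p ?F \<longleftrightarrow> (\<forall>u \<in> carrier_vec p. 0 \<le> quad_form ?F u)"
    using transpose_congruence[OF T Psi_carrier Psi_sym] T Psi_carrier unfolding psd_def by auto
  also have "\<dots> \<longleftrightarrow> (\<forall>u \<in> carrier_vec p.
      quad_form (- P22) (transpose_mat (Z + P12 * mat_inv P22) *\<^sub>v u) \<le> quad_form S u)"
  proof (intro ball_cong refl)
    fix u :: "real vec" assume u: "u \<in> carrier_vec p"
    show "0 \<le> quad_form ?F u
      \<longleftrightarrow> quad_form (- P22) (transpose_mat (Z + P12 * mat_inv P22) *\<^sub>v u) \<le> quad_form S u"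
      unfolding quad_form_graph[OF Z u] quad_form_uminus_mat[OF P22 mult_mat_vec_carrier[OF W u]]
      by linarith
  qed
  finally show ?thesis .
qed

lemma graph_loewner_le_S:
  assumes N: "psd q (- P22)" and Z: "Z \<in> carrier_mat p q"
  shows "loewner_le p (transpose_mat (1\<^sub>m p @\<^sub>r transpose_mat Z) * Psi * (1\<^sub>m p @\<^sub>r transpose_mat Z)) S"
proof -
  let ?T = "1\<^sub>m p @\<^sub>r transpose_mat Z"
  let ?F = "transpose_mat ?T * Psi * ?T"
  have T: "?T \<in> carrier_mat (p + q) p" using Z by auto
  have F: "?F \<in> carrier_mat p p" using T Psi_carrier by auto
  have W: "transpose_mat (Z + P12 * mat_inv P22) \<in> carrier_mat q p" using Z P12 P22_inv(1) by simp
  have "psd p (S - ?F)" unfolding psd_def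
  proof (intro conjI ballI)
    show "S - ?F \<in> carrier_mat p p" using F by (rule minus_carrier_mat)
    show "transpose_mat (S - ?F) = S - ?F"
      using transpose_minus[OF S_carrier F] S_sym transpose_congruence[OF T Psi_carrier Psi_sym] by simp
    fix u :: "real vec" assume u: "u \<in> carrier_vec p"
    have "quad_form (S - ?F) u = quad_form S u - quad_form ?F u"
      using minus_mult_distrib_mat_vec[OF S_carrier F u] S_carrier F u
      by (simp add: scalar_prod_minus_distrib[of _ p])
    also have "\<dots> = quad_form (- P22) (transpose_mat (Z + P12 * mat_inv P22) *\<^sub>v u)"
      unfolding quad_form_graph[OF Z u] quad_form_uminus_mat[OF P22 mult_mat_vec_carrier[OF W u]]
      by simp
    also have "\<dots> \<ge> 0" using N mult_mat_vec_carrier[OF W u] unfolding psd_def by blast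
    finally show "0 \<le> quad_form (S - ?F) u" .
  qed
  then show ?thesis unfolding loewner_le_def using S_carrier F by simp
qed

lemma quad_form_mat_inv_Psi_graph:
  assumes S_det: "det S \<noteq> 0" and Z: "Z \<in> carrier_mat p q" and v: "v \<in> carrier_vec q"
  shows "quad_form (mat_inv Psi) ((- (Z *\<^sub>v v)) @\<^sub>v v)
    = quad_form (mat_inv S) ((Z + P12 * mat_inv P22) *\<^sub>v v) + quad_form (mat_inv P22) v"
proof -
  have W: "Z + P12 * mat_inv P22 \<in> carrier_mat p q" using Z P12 P22_inv(1) by simp
  have mZv: "- (Z *\<^sub>v v) \<in> carrier_vec p" using Z v by simp
  have "(Z + P12 * mat_inv P22) *\<^sub>v v = Z *\<^sub>v v + P12 *\<^sub>v (mat_inv P22 *\<^sub>v v)"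
    using add_mult_distrib_mat_vec[OF Z _ v, of "P12 * mat_inv P22"] P12 P22_inv(1) v by simp
  then have "- (Z *\<^sub>v v) - P12 *\<^sub>v (mat_inv P22 *\<^sub>v v) = - ((Z + P12 * mat_inv P22) *\<^sub>v v)"
    using Z P12 P22_inv(1) v by (intro eq_vecI) auto
  then show ?thesis
    unfolding quad_form_mat_inv_Psi[OF S_det mZv v]
    using quad_form_uminus_vec[OF mat_inv_inverse(1)[OF S_carrier S_det] mult_mat_vec_carrier[OF W v]]
    by simp
qed

lemma psd_sharp_graph_iff:
  assumes S_det: "det S \<noteq> 0" and Z: "Z \<in> carrier_mat p q"
  shows "psd q (transpose_mat (1\<^sub>m q @\<^sub>r Z) * (swap_block_mat q p * mat_inv Psi * swap_block_mat p q)
      * (1\<^sub>m q @\<^sub>r Z))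
    \<longleftrightarrow> (\<forall>v \<in> carrier_vec q.
          quad_form (mat_inv S) ((Z + P12 * mat_inv P22) *\<^sub>v v) \<le> quad_form (- mat_inv P22) v)"
proof -
  let ?J = "swap_block_mat p q :: real mat"
  let ?T = "1\<^sub>m q @\<^sub>r Z"
  let ?X = "mat_inv Psi"
  note X = mat_inv_inverse[OF Psi_carrier Psi_det_nonzero[OF S_det]]
  have J: "?J \<in> carrier_mat (p + q) (q + p)" by auto
  have T: "?T \<in> carrier_mat (q + p) q" using Z by auto
  have sharp: "swap_block_mat q p * ?X * ?J = transpose_mat ?J * (- ?X) * ?J"
    unfolding swap_block_mat_transpose[where p = p and q = q] using J X(1) by simp
  have "transpose_mat ?J \<in> carrier_mat (q + p) (p + q)" using J by simp
  then have C: "transpose_mat ?J * (- ?X) * ?J \<in> carrier_mat (q + p) (q + p)"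
    using J X(1) by (meson mult_carrier_mat uminus_carrier_mat)
  have "transpose_mat ?X = ?X"
    using inverse_of_sym_mat_sym[OF Psi_carrier Psi_sym X(1,2)] .
  then have C_sym: "transpose_mat (transpose_mat ?J * (- ?X) * ?J) = transpose_mat ?J * (- ?X) * ?J"
    using transpose_congruence[OF J, of "- ?X"] X(1) by (simp add: transpose_uminus)
  show ?thesis
    unfolding sharp psd_congruence_iff[OF T C C_sym]
  proof (intro ball_cong refl)
    fix v :: "real vec" assume v: "v \<in> carrier_vec q"
    have Tv: "?T *\<^sub>v v \<in> carrier_vec (q + p)" using T v by simp
    have "quad_form (transpose_mat ?J * (- ?X) * ?J) (?T *\<^sub>v v)
        = - quad_form ?X ((- (Z *\<^sub>v v)) @\<^sub>v v)"
      unfolding quad_form_congruence[OF J uminus_carrier_mat[OF X(1)] Tv] swap_block_mat_mult_graph[OF Z v]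
      using quad_form_uminus_mat[OF X(1)] Z v by simp
    then show "0 \<le> quad_form (transpose_mat ?J * (- ?X) * ?J) (?T *\<^sub>v v)
      \<longleftrightarrow> quad_form (mat_inv S) ((Z + P12 * mat_inv P22) *\<^sub>v v) \<le> quad_form (- mat_inv P22) v"
      unfolding quad_form_mat_inv_Psi_graph[OF S_det Z v] quad_form_uminus_mat[OF P22_inv(1) v]
      by linarith
  qed
qed

lemma psd_graph_iff_psd_sharp_graph:
  assumes S_pd: "pd p S" and P22_nd: "nd q P22" and Z: "Z \<in> carrier_mat p q"
  shows "psd p (transpose_mat (1\<^sub>m p @\<^sub>r transpose_mat Z) * Psi * (1\<^sub>m p @\<^sub>r transpose_mat Z))
    \<longleftrightarrow> psd q (transpose_mat (1\<^sub>m q @\<^sub>r Z) * (swap_block_mat q p * mat_inv Psi * swap_block_mat p q)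
      * (1\<^sub>m q @\<^sub>r Z))"
proof -
  have S_det: "det S \<noteq> 0" by (rule pd_det_nonzero[OF S_pd])
  note S_inv = mat_inv_inverse[OF S_carrier S_det]
  have N: "psd q (- P22)" using P22_nd unfolding nd_def by (rule pd_imp_psd)
  have W: "Z + P12 * mat_inv P22 \<in> carrier_mat p q" using Z P12 P22_inv(1) by simp
  have Ni: "- mat_inv P22 \<in> carrier_mat q q" using P22_inv(1) by simp
  have "- P22 * - mat_inv P22 = 1\<^sub>m q" and "- mat_inv P22 * - P22 = 1\<^sub>m q"
    using P22 P22_inv by auto
  then show ?thesis
    unfolding psd_graph_iff[OF Z] psd_sharp_graph_iff[OF S_det Z]
    by (rule congruence_le_iff_inverse_congruence_le[OF pd_imp_psd[OF S_pd] S_inv N Ni _ _ W])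
qed

end

theorem lemmaA1:
  fixes p q :: nat and Psi11 Psi12 Psi22 :: "real mat"
  assumes "Psi11 \<in> carrier_mat p p" and "Psi12 \<in> carrier_mat p q" and "Psi22 \<in> carrier_mat q q"
    and "transpose_mat Psi11 = Psi11" and "transpose_mat Psi22 = Psi22"
    and "pd p (Psi11 - Psi12 * mat_inv Psi22 * transpose_mat Psi12)"
    and "nd q Psi22"
  shows "let Psi = four_block_mat Psi11 Psi12 (transpose_mat Psi12) Psi22;
             S = Psi11 - Psi12 * mat_inv Psi22 * transpose_mat Psi12;
             Psi_sharp = four_block_mat (0\<^sub>m q p) (- 1\<^sub>m q) (1\<^sub>m p) (0\<^sub>m p q) * mat_inv Psi
                         * four_block_mat (0\<^sub>m p q) (- 1\<^sub>m p) (1\<^sub>m q) (0\<^sub>m q p);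
             M = {Z \<in> carrier_mat p q.
                    psd p (transpose_mat (1\<^sub>m p @\<^sub>r transpose_mat Z) * Psi * (1\<^sub>m p @\<^sub>r transpose_mat Z))};
             M1 = {Z \<in> carrier_mat p q.
                    psd q (transpose_mat (1\<^sub>m q @\<^sub>r Z) * Psi_sharp * (1\<^sub>m q @\<^sub>r Z))};
             M2 = {Z \<in> carrier_mat p q. \<exists>Q.
                    transpose_mat (1\<^sub>m p @\<^sub>r transpose_mat Z) * Psi * (1\<^sub>m p @\<^sub>r transpose_mat Z) = Q
                    \<and> psd p Q \<and> loewner_le p Q S}
         in M = M1 \<and> M1 = M2"
proof -
  interpret sym_block_schur p q Psi11 Psi12 Psi22
    using assms(1-5) nd_det_nonzero[OF assms(7)] by unfold_locales
  have "psd q (- Psi22)" using assms(7) unfolding nd_def by (rule pd_imp_psd)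
  then show ?thesis
    unfolding Let_def
    using psd_graph_iff_psd_sharp_graph[OF assms(6,7)] graph_loewner_le_S by auto
qed

end
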